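(* For $t\in(0,1)$ and $n\ge1$, with $H_n(t):=t(t-1)\frac{d}{dt}\ln D_n(t)$, $$H_n(t)=(2n+\alpha+\beta)(y_n-tr_n)-n(n+\alpha)=-(2n+\alpha+\beta)\mathsf p_1(n,t)-n(n+\alpha),$$ and $$r_n(t)=-\frac{H_n'(t)}{2n+\alpha+\beta},\qquad y_n(t)=\frac{-tH_n'(t)+H_n(t)+n(n+\alpha)}{2n+\alpha+\beta}.$$
   Context: Fix $\alpha>0$, $\beta>0$, and real $A,B$ with $A\ge0$, $A+B\ge0$, not both zero; $\theta$ is the Heaviside step function. For $t\in(0,1)$ let $w(x;t)=x^\alpha(1-x)^\beta(A+B\theta(x-t))$ on $[0,1]$, with moments $\mu_i(t)=\int_0^1x^iw\,dx$ and Hankel determinant $D_n(t)=\det(\mu_{j+k}(t))_{j,k=0}^{n-1}$. Let $P_n(x)=P_n(x;t)=x^n+\mathsf p_1(n,t)x^{n-1}+\cdots$ be the monic orthogonal polynomials: $\int_0^1P_iP_jw\,dx=h_i(t)\delta_{ij}$, $h_i>0$. Define $r_n(t)=B\,t^\alpha(1-t)^\beta P_n(t;t)P_{n-1}(t;t)/h_{n-1}$ and $y_n(t)=\frac{\beta}{h_{n-1}}\int_0^1\frac{P_n(y)P_{n-1}(y)}{1-y}\,y^\alpha(1-y)^\beta(A+B\theta(y-t))\,dy$. A prime denotes $d/dt$. *)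

theory Defs
  imports "HOL-Analysis.Analysis" "HOL-Computational_Algebra.Polynomial"
    "Jordan_Normal_Form.Determinant"
begin

text \<open>Heaviside step function (the value at 0 is irrelevant: a null set).\<close>
definition heaviside :: "real \<Rightarrow> real" where
  "heaviside x = (if x > 0 then 1 else 0)"

definition wgt :: "real \<Rightarrow> real \<Rightarrow> real \<Rightarrow> real \<Rightarrow> real \<Rightarrow> real \<Rightarrow> real" where
  "wgt \<alpha> \<beta> A B t x = x powr \<alpha> * (1 - x) powr \<beta> * (A + B * heaviside (x - t))"

definition moment :: "real \<Rightarrow> real \<Rightarrow> real \<Rightarrow> real \<Rightarrow> real \<Rightarrow> nat \<Rightarrow> real" where
  "moment \<alpha> \<beta> A B t i = integral {0..1} (\<lambda>x. x ^ i * wgt \<alpha> \<beta> A B t x)"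

definition hankelD :: "real \<Rightarrow> real \<Rightarrow> real \<Rightarrow> real \<Rightarrow> real \<Rightarrow> nat \<Rightarrow> real" where
  "hankelD \<alpha> \<beta> A B t n = det (mat n n (\<lambda>(j, k). moment \<alpha> \<beta> A B t (j + k)))"

definition opoly :: "real \<Rightarrow> real \<Rightarrow> real \<Rightarrow> real \<Rightarrow> real \<Rightarrow> nat \<Rightarrow> real poly" where
  "opoly \<alpha> \<beta> A B t n = (THE p. degree p = n \<and> coeff p n = 1 \<and>
     (\<forall>m<n. integral {0..1} (\<lambda>x. poly p x * x ^ m * wgt \<alpha> \<beta> A B t x) = 0))"

definition hnorm :: "real \<Rightarrow> real \<Rightarrow> real \<Rightarrow> real \<Rightarrow> real \<Rightarrow> nat \<Rightarrow> real" where
  "hnorm \<alpha> \<beta> A B t n =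
     integral {0..1} (\<lambda>x. (poly (opoly \<alpha> \<beta> A B t n) x)\<^sup>2 * wgt \<alpha> \<beta> A B t x)"

definition p1 :: "real \<Rightarrow> real \<Rightarrow> real \<Rightarrow> real \<Rightarrow> nat \<Rightarrow> real \<Rightarrow> real" where
  "p1 \<alpha> \<beta> A B n t = coeff (opoly \<alpha> \<beta> A B t n) (n - 1)"

definition rn :: "real \<Rightarrow> real \<Rightarrow> real \<Rightarrow> real \<Rightarrow> nat \<Rightarrow> real \<Rightarrow> real" where
  "rn \<alpha> \<beta> A B n t = B * t powr \<alpha> * (1 - t) powr \<beta>
     * poly (opoly \<alpha> \<beta> A B t n) t * poly (opoly \<alpha> \<beta> A B t (n - 1)) t
     / hnorm \<alpha> \<beta> A B t (n - 1)"

definition yn :: "real \<Rightarrow> real \<Rightarrow> real \<Rightarrow> real \<Rightarrow> nat \<Rightarrow> real \<Rightarrow> real" where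
  "yn \<alpha> \<beta> A B n t = \<beta> / hnorm \<alpha> \<beta> A B t (n - 1)
     * integral {0..1} (\<lambda>y. poly (opoly \<alpha> \<beta> A B t n) y * poly (opoly \<alpha> \<beta> A B t (n - 1)) y
                           / (1 - y) * wgt \<alpha> \<beta> A B t y)"

definition Hn :: "real \<Rightarrow> real \<Rightarrow> real \<Rightarrow> real \<Rightarrow> nat \<Rightarrow> real \<Rightarrow> real" where
  "Hn \<alpha> \<beta> A B n t = t * (t - 1) * deriv (\<lambda>s. ln (hankelD \<alpha> \<beta> A B s n)) t"

end

theory Submission
  imports Defs
begin

(*
  For fixed t the functional  L_t(q) = int_0^1 q(x) w(x;t) dx  is positive definite
  on real polynomials, so the monic orthogonal polynomials P_j are obtained by Gram-Schmidt
  from the monomials, and a triangular change of basis shows D_n(t) = prod_{j<n} h_j(t).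

  The t-dependence of w only sits in the jump: L_t(q) = A int_0^1 q w0 + B int_t^1 q w0 with
  w0 = x^\<alpha>(1-x)^\<beta>, so d/dt L_t(q) = -B q(t) w0(t) for fixed q.  Combined with orthogonality
  this gives h_j' = -B P_j(t)^2 w0(t) and p1(n,t)' = r_n(t); hence
  (ln D_n)' = sum_j -B P_j(t)^2 w0(t)/h_j.

  Integration by parts against (x(1-x) w0)' = ((\<alpha>+1) - (\<alpha>+\<beta>+2)x) w0 (Pearson's equation)
  evaluates each summand through the two top coefficients of P_j; the sum telescopes to
  H_n = -(2n+\<alpha>+\<beta>) p1(n,t) - n(n+\<alpha>).  A second integration by parts gives
  y_n = -p1(n,t) + t r_n.  The theorem follows from these two identities and p1' = r_n.
*)

section \<open>Gram-Schmidt orthogonalisation of the monomials\<close>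

function gs_poly :: "(real poly \<Rightarrow> real) \<Rightarrow> nat \<Rightarrow> real poly" where
  "gs_poly L 0 = 1"
| "gs_poly L (Suc n) = monom 1 (Suc n) -
     (\<Sum>j\<le>n. Polynomial.smult (L (monom 1 (Suc n) * gs_poly L j) / L (gs_poly L j * gs_poly L j))
                             (gs_poly L j))"
  by pat_completeness auto
termination by (relation "Wellfounded.measure (\<lambda>(L,n). n)") auto

declare gs_poly.simps(2)[simp del]

lemma gs_coeff_above: "k > n \<Longrightarrow> coeff (gs_poly L n) k = 0"
proof (induction n arbitrary: k rule: less_induct)
  case (less n)
  show ?case
  proof (cases n)
    case 0 then show ?thesis using less by (simp add: coeff_1)
  next
    case (Suc m)
    have "coeff (gs_poly L j) k = 0" if "j \<le> m" for j using less Suc that by auto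
    then show ?thesis using less Suc by (simp add: gs_poly.simps coeff_sum coeff_monom)
  qed
qed

lemma gs_degree_le: "degree (gs_poly L n) \<le> n"
  by (meson gs_coeff_above degree_le leI)

lemma gs_lead_coeff: "coeff (gs_poly L n) n = 1"
proof (cases n)
  case 0 then show ?thesis by simp
next
  case (Suc m)
  have "coeff (gs_poly L j) (Suc m) = 0" if "j \<le> m" for j using that by (intro gs_coeff_above) auto
  then show ?thesis using Suc by (simp add: gs_poly.simps coeff_sum)
qed

lemma gs_nonzero: "gs_poly L n \<noteq> 0"
  using gs_lead_coeff[of L n] by auto

lemma gs_degree: "degree (gs_poly L n) = n"
  by (metis gs_lead_coeff gs_degree_le le_antisym le_degree one_neq_zero)

lemma gs_diff_coeff: "j \<le> k \<Longrightarrow> coeff (gs_poly L j - gs_poly L' j) k = 0"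
  using gs_lead_coeff gs_coeff_above by (cases "k = j") auto

lemma poly_as_monom_sum: "(\<forall>k\<ge>n. coeff q k = 0) \<Longrightarrow> q = (\<Sum>i<n. monom (coeff q i) i)"
  by (auto simp: poly_eq_iff coeff_sum coeff_monom)

lemma congruence_entry:
  fixes c :: "nat \<Rightarrow> nat \<Rightarrow> real"
  assumes "i < n" "j < n"
  shows "(mat n n (\<lambda>(i,k). c i k) * mat n n (\<lambda>(j,k). \<mu> (j + k)) * transpose_mat (mat n n (\<lambda>(i,k). c i k))) $$ (i, j)
     = (\<Sum>k<n. \<Sum>l<n. c i k * c j l * \<mu> (k + l))"
  using assms
  apply (simp add: scalar_prod_def atLeast0LessThan sum_distrib_right)
  apply (subst sum.swap)
  apply (simp add: algebra_simps)
  done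

lemma coeff_mult_X1X: "coeff (p * [:0, 1, -1:]) k =
   (if k = 0 then 0 else coeff p (k - 1) - (if 2 \<le> k then coeff p (k - 2) else 0))"
  for p :: "'a::comm_ring_1 poly"
  by (cases k; cases "k - 1") (auto simp: mult_pCons_right coeff_pCons)

lemma coeff_mult_lin: "coeff (p * [:c, d:]) k = c * coeff p k + (if k = 0 then 0 else d * coeff p (k - 1))"
  for p :: "'a::comm_ring_1 poly"
  by (cases k) (auto simp: mult_pCons_right coeff_pCons)

lemma coeff_mult_X: "coeff ([:0, 1:] * p) k = (if k = 0 then 0 else coeff p (k - 1))"
  for p :: "'a::comm_ring_1 poly"
  by (cases k) (auto simp: coeff_pCons)

locale posdef_functional =
  fixes L :: "real poly \<Rightarrow> real"
  assumes L_add: "L (p + q) = L p + L q"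
    and L_smult: "L (Polynomial.smult c p) = c * L p"
    and L_pos: "p \<noteq> 0 \<Longrightarrow> L (p * p) > 0"
begin

lemma L0[simp]: "L 0 = 0" using L_smult[of 0 0] by simp
lemma L_minus: "L (- p) = - L p" using L_smult[of "-1" p] by simp
lemma L_diff: "L (p - q) = L p - L q"
  using L_add[of p "-q"] L_minus[of q] by simp
lemma L_sum: "L (\<Sum>i\<in>S. f i) = (\<Sum>i\<in>S. L (f i))"
  by (induction S rule: infinite_finite_induct) (auto simp: L_add)

abbreviation "P \<equiv> gs_poly L"
abbreviation "h j \<equiv> L (P j * P j)"

lemma h_pos: "h j > 0" using L_pos gs_nonzero by blast

lemma gs_orth_less: "i < j \<Longrightarrow> L (P i * P j) = 0"
proof (induction j arbitrary: i rule: less_induct)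
  case (less j)
  then obtain m where j: "j = Suc m" by (cases j) auto
  have im: "i \<le> m" using less j by auto
  have orth: "L (P i * P k) = 0" if "k \<le> m" "k \<noteq> i" for k
  proof (cases "i < k")
    case True then show ?thesis using less that j by auto
  next
    case False then have "k < i" using that by auto
    then have "L (P k * P i) = 0" using less.IH[of i k] im j by simp
    then show ?thesis by (metis mult.commute)
  qed
  have "L (P i * P j) = L (P i * monom 1 (Suc m)) -
      (\<Sum>k\<le>m. L (monom 1 (Suc m) * P k) / h k * L (P i * P k))"
    by (simp add: j gs_poly.simps right_diff_distrib sum_distrib_left L_diff L_sum L_smult mult_smult_right)
  also have "(\<Sum>k\<le>m. L (monom 1 (Suc m) * P k) / h k * L (P i * P k))
      = L (monom 1 (Suc m) * P i) / h i * L (P i * P i)"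
    using orth im by (subst sum.remove[of _ i]) (auto intro!: sum.neutral)
  also have "\<dots> = L (monom 1 (Suc m) * P i)" using h_pos[of i] by simp
  finally show ?case by (simp add: mult.commute[of "monom 1 (Suc m)" "P i"])
qed

lemma gs_orth: "i \<noteq> j \<Longrightarrow> L (P i * P j) = 0"
  by (metis gs_orth_less linorder_neq_iff mult.commute)

lemma gs_span: "(\<forall>k>m. coeff q k = 0) \<Longrightarrow> \<exists>c. q = (\<Sum>j\<le>m. Polynomial.smult (c j) (P j))"
proof (induction m arbitrary: q)
  case 0
  then have "q = Polynomial.smult (coeff q 0) (P 0)"
    by (auto simp: poly_eq_iff coeff_pCons split: nat.splits)
  then show ?case by (intro exI[of _ "\<lambda>_. coeff q 0"]) simp
next
  case (Suc m)
  define r where "r = q - Polynomial.smult (coeff q (Suc m)) (P (Suc m))"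
  have "\<forall>k>m. coeff r k = 0"
  proof (intro allI impI)
    fix k assume "k > m"
    then consider "k = Suc m" | "k > Suc m" by linarith
    then show "coeff r k = 0"
      using Suc.prems gs_lead_coeff[of L "Suc m"] gs_coeff_above[of "Suc m" k L]
      by cases (auto simp: r_def)
  qed
  then obtain c where c: "r = (\<Sum>j\<le>m. Polynomial.smult (c j) (P j))" using Suc.IH by blast
  define a where "a = coeff q (Suc m)"
  have q: "q = r + Polynomial.smult a (P (Suc m))" by (simp add: r_def a_def)
  have "(\<Sum>j\<le>Suc m. Polynomial.smult ((c(Suc m := a)) j) (P j))
      = (\<Sum>j\<le>m. Polynomial.smult (c j) (P j)) + Polynomial.smult a (P (Suc m))"
    by (simp add: sum.atMost_Suc)
  then have "q = (\<Sum>j\<le>Suc m. Polynomial.smult ((c(Suc m := a)) j) (P j))"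
    using q c by simp
  then show ?case by blast
qed

lemma gs_orth_lower_degree: "(\<forall>k\<ge>j. coeff q k = 0) \<Longrightarrow> L (P j * q) = 0"
proof (cases j)
  case 0
  assume "\<forall>k\<ge>j. coeff q k = 0"
  then have "q = 0" using 0 by (auto simp: poly_eq_iff)
  then show ?thesis by simp
next
  case (Suc m)
  assume "\<forall>k\<ge>j. coeff q k = 0"
  then have "\<forall>k>m. coeff q k = 0" using Suc by auto
  then obtain c where c: "q = (\<Sum>i\<le>m. Polynomial.smult (c i) (P i))" using gs_span by blast
  show ?thesis unfolding c
    by (simp add: sum_distrib_left L_sum mult_smult_right L_smult gs_orth Suc)
qed

lemma gs_orth_monom: "m < n \<Longrightarrow> L (P n * monom 1 m) = 0"
  by (intro gs_orth_lower_degree) (auto simp: coeff_monom)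

lemma gs_unique:
  assumes "degree p = n" "coeff p n = 1" "\<forall>m<n. L (p * monom 1 m) = 0"
  shows "p = P n"
proof -
  define d where "d = p - P n"
  have dz: "\<forall>k\<ge>n. coeff d k = 0"
    using assms gs_lead_coeff[of L n] gs_coeff_above[of n _ L]
    by (simp add: d_def) (metis coeff_eq_0 le_neq_implies_less)
  have dm: "L (d * monom 1 m) = 0" if "m < n" for m
    using assms that gs_orth_monom[OF that] by (simp add: d_def left_diff_distrib L_diff)
  have "(\<Sum>i<n. monom (coeff d i) i) = (\<Sum>i<n. Polynomial.smult (coeff d i) (monom 1 i))"
    by (simp add: smult_monom)
  with poly_as_monom_sum[OF dz] have dd: "d = (\<Sum>i<n. Polynomial.smult (coeff d i) (monom 1 i))"
    by (rule trans)
  have "L (d * d) = L (d * (\<Sum>i<n. Polynomial.smult (coeff d i) (monom 1 i)))"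
    using dd by (rule arg_cong[where f="\<lambda>q. L (d * q)"])
  also have "\<dots> = (\<Sum>i<n. coeff d i * L (d * monom 1 i))"
    by (simp add: sum_distrib_left L_sum mult_smult_right L_smult)
  also have "\<dots> = 0" using dm by simp
  finally have "d = 0" using L_pos by fastforce
  then show ?thesis by (simp add: d_def)
qed

lemma L_bilinear_expand:
  assumes "\<forall>k\<ge>N. coeff p k = 0" "\<forall>k\<ge>N. coeff q k = 0"
  shows "L (p * q) = (\<Sum>k<N. \<Sum>l<N. coeff p k * coeff q l * L (monom 1 (k + l)))"
proof -
  have p: "p = (\<Sum>k<N. Polynomial.smult (coeff p k) (monom 1 k))"
    using poly_as_monom_sum[OF assms(1)] by (simp add: smult_monom)
  have q: "q = (\<Sum>l<N. Polynomial.smult (coeff q l) (monom 1 l))"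
    using poly_as_monom_sum[OF assms(2)] by (simp add: smult_monom)
  have "p * q = (\<Sum>k<N. \<Sum>l<N. Polynomial.smult (coeff p k * coeff q l) (monom 1 (k + l)))"
    by (subst p, subst q) (simp add: sum_product mult_monom smult_monom)
  then show ?thesis by (simp add: L_sum L_smult)
qed

text \<open>The Hankel determinant of the moments is the product of the squared norms:
  with C the (unit lower triangular) coefficient matrix of P_0..P_{n-1}, the congruence
  C M C^T is the diagonal Gram matrix of the P_j.\<close>
lemma hankel_det_prod: "det (mat n n (\<lambda>(j,k). L (monom 1 (j + k)))) = (\<Prod>j<n. h j)"
proof -
  define C where "C = mat n n (\<lambda>(i,k). coeff (P i) k)"
  define M where "M = mat n n (\<lambda>(j,k). L (monom 1 (j + k)))"
  define D where "D = C * M * transpose_mat C"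
  have CM: "C \<in> carrier_mat n n" "M \<in> carrier_mat n n" "transpose_mat C \<in> carrier_mat n n"
    by (auto simp: C_def M_def)
  then have D: "D \<in> carrier_mat n n" by (auto simp: D_def)
  have gram: "D $$ (i, j) = L (P i * P j)" if "i < n" "j < n" for i j
  proof -
    have "D $$ (i, j) = (\<Sum>k<n. \<Sum>l<n. coeff (P i) k * coeff (P j) l * L (monom 1 (k + l)))"
      unfolding D_def C_def M_def by (rule congruence_entry[OF that])
    also have "\<dots> = L (P i * P j)"
      using that by (subst L_bilinear_expand[of n]) (auto intro!: gs_coeff_above)
    finally show ?thesis .
  qed
  have "det D = (\<Prod>i = 0..<n. h i)"
    using D by (subst det_upper_triangular[OF _ D])
       (auto simp: prod_list_diag_prod gram gs_orth intro!: upper_triangularI prod.cong)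
  moreover have "det C = 1"
    by (subst det_lower_triangular[OF _ CM(1)])
       (auto simp: prod_list_diag_prod C_def gs_lead_coeff intro!: gs_coeff_above prod.neutral)
  moreover have "det D = det C * det M * det (transpose_mat C)"
    using CM by (simp add: D_def det_mult[of _ n])
  moreover have "det (transpose_mat C) = det C" using det_transpose[OF CM(1)] .
  ultimately have "det M = (\<Prod>i = 0..<n. h i)" by simp
  then show ?thesis by (simp add: M_def atLeast0LessThan)
qed

text \<open>The subleading coefficient of P_j, i.e. p1(j) (zero for j = 0).\<close>
definition subcoeff :: "nat \<Rightarrow> real" where "subcoeff j = (if j = 0 then 0 else coeff (P j) (j - 1))"

lemma L_P_deg_succ:
  assumes "\<forall>k>Suc j. coeff R k = 0"
  shows "L (P j * R) = h j * (coeff R j - coeff R (Suc j) * subcoeff (Suc j))"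
proof -
  define r1 r0 where "r1 = coeff R (Suc j)" and "r0 = coeff R j - coeff R (Suc j) * subcoeff (Suc j)"
  define D where "D = R - Polynomial.smult r1 (P (Suc j)) - Polynomial.smult r0 (P j)"
  have "\<forall>k\<ge>j. coeff D k = 0"
  proof (intro allI impI)
    fix k assume "j \<le> k"
    then consider "k = j" | "k = Suc j" | "k > Suc j" by linarith
    then show "coeff D k = 0"
    proof cases
      case 1 then show ?thesis by (simp add: D_def r0_def r1_def subcoeff_def gs_lead_coeff)
    next
      case 2 then show ?thesis by (simp add: D_def r0_def r1_def gs_lead_coeff gs_coeff_above)
    next
      case 3 then show ?thesis using assms by (simp add: D_def gs_coeff_above)
    qed
  qed
  then have "L (P j * D) = 0" by (rule gs_orth_lower_degree)
  then have "L (P j * R) = r1 * L (P j * P (Suc j)) + r0 * h j"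
    by (simp add: D_def right_diff_distrib L_diff L_smult)
  then show ?thesis by (simp add: gs_orth r0_def)
qed

lemma L_pearson_square:
  fixes c d :: real
  shows "L (pderiv (P j * P j) * [:0, 1, -1:] + (P j * P j) * [:c, d:])
    = h j * (2 * (of_nat j - (of_nat j - 1) * subcoeff j + of_nat j * subcoeff (Suc j)) + c + d * subcoeff j - d * subcoeff (Suc j))"
proof -
  define R1 where "R1 = pderiv (P j) * [:0, 1, -1:]"
  define R2 where "R2 = P j * [:c, d:]"
  have eq: "pderiv (P j * P j) * [:0, 1, -1:] + (P j * P j) * [:c, d:] = P j * R1 + P j * R1 + P j * R2"
    by (simp add: R1_def R2_def pderiv_mult algebra_simps)
  have cP: "coeff (P j) k = 0" if "k > j" for k using gs_coeff_above that by blast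
  have R1z: "\<forall>k>Suc j. coeff R1 k = 0"
  proof (intro allI impI)
    fix k assume k: "k > Suc j"
    define m where "m = k - 2"
    have m: "k = Suc (Suc m)" using k by (simp add: m_def)
    show "coeff R1 k = 0" unfolding R1_def coeff_mult_X1X
      using k m cP[of "Suc (Suc m)"] cP[of "Suc m"] by (simp add: coeff_pderiv)
  qed
  have R2z: "\<forall>k>Suc j. coeff R2 k = 0"
    unfolding R2_def coeff_mult_lin by (auto simp: cP)
  have R1a: "coeff R1 (Suc j) = - of_nat j"
    unfolding R1_def coeff_mult_X1X by (cases j) (auto simp: coeff_pderiv gs_coeff_above gs_lead_coeff)
  have R1b: "coeff R1 j = of_nat j - (of_nat j - 1) * subcoeff j"
  proof (cases j)
    case 0 then show ?thesis by (simp add: R1_def coeff_mult_X1X subcoeff_def)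
  next
    case (Suc i)
    then show ?thesis
      by (cases i) (auto simp: R1_def coeff_mult_X1X coeff_pderiv gs_lead_coeff subcoeff_def algebra_simps)
  qed
  have R2a: "coeff R2 (Suc j) = d" unfolding R2_def coeff_mult_lin by (simp add: gs_lead_coeff cP)
  have R2b: "coeff R2 j = c + d * subcoeff j" unfolding R2_def coeff_mult_lin by (simp add: gs_lead_coeff subcoeff_def)
  show ?thesis
    unfolding eq L_add L_P_deg_succ[OF R1z] L_P_deg_succ[OF R2z] R1a R1b R2a R2b
    by (simp add: algebra_simps)
qed

text \<open>If the Pearson operator with c = a+1, d = -(a+b+2) maps P_j^2 to -B P_j(t)^2 G under L
  (the integration-by-parts identity for the weight), then the weighted sum of the values
  P_j(t)^2 telescopes to an expression in p1(n).\<close>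
lemma sum_pearson_telescope:
  fixes a b B G :: real
  assumes ibp: "\<And>j. L (pderiv (P j * P j) * [:0, 1, -1:] + (P j * P j) * [:a + 1, - (a + b + 2):])
      = - B * ((poly (P j) t)\<^sup>2 * G)"
  shows "(\<Sum>j<n. B * ((poly (P j) t)\<^sup>2 * G) / h j) = - ((2 * real n + a + b) * subcoeff n + real n * (real n + a))"
proof (induction n)
  case 0 then show ?case by (simp add: subcoeff_def)
next
  case (Suc n)
  have e: "- B * ((poly (P n) t)\<^sup>2 * G) = h n * (2 * (real n - (real n - 1) * subcoeff n + real n * subcoeff (Suc n))
      + (a + 1) + (- (a + b + 2)) * subcoeff n - (- (a + b + 2)) * subcoeff (Suc n))"
    using ibp[of n] L_pearson_square[of n "a + 1" "- (a + b + 2)"] by simp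
  have hp: "h n > 0" by (rule h_pos)
  have "B * ((poly (P n) t)\<^sup>2 * G) / h n = - (2 * (real n - (real n - 1) * subcoeff n + real n * subcoeff (Suc n))
      + (a + 1) + (- (a + b + 2)) * subcoeff n - (- (a + b + 2)) * subcoeff (Suc n))"
    using e hp by (simp add: field_simps)
  then show ?case using Suc.IH by (simp add: algebra_simps)
qed

lemma L_x_pderiv_consecutive:
  assumes n: "n = Suc m"
  shows "L ([:0, 1:] * pderiv (P n * P m)) = - subcoeff n * h m"
proof -
  define R where "R = [:0, 1:] * pderiv (P m)"
  define R' where "R' = [:0, 1:] * pderiv (P n)"
  have eq: "[:0, 1:] * pderiv (P n * P m) = P n * R + P m * R'"
    by (simp add: R_def R'_def pderiv_mult algebra_simps)
  have Rz: "\<forall>k\<ge>n. coeff R k = 0"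
    unfolding R_def coeff_mult_X using n by (auto simp: coeff_pderiv gs_coeff_above)
  have R'z: "\<forall>k>Suc m. coeff R' k = 0"
    unfolding R'_def coeff_mult_X using n by (auto simp: coeff_pderiv gs_coeff_above)
  have c1: "coeff R' (Suc m) = real n"
    unfolding R'_def coeff_mult_X using n by (simp add: coeff_pderiv gs_lead_coeff)
  have c0: "coeff R' m = real m * subcoeff n"
    unfolding R'_def coeff_mult_X using n by (cases m) (auto simp: coeff_pderiv subcoeff_def)
  have "L ([:0, 1:] * pderiv (P n * P m)) = L (P n * R) + L (P m * R')"
    by (subst eq) (rule L_add)
  also have "L (P n * R) = 0" by (rule gs_orth_lower_degree[OF Rz])
  also have "L (P m * R') = h m * (real m * subcoeff n - real n * subcoeff n)"
    using L_P_deg_succ[OF R'z] c0 c1 n by simp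
  finally show ?thesis using n by (simp add: algebra_simps)
qed

end

lemma has_integral_times_step:
  fixes f :: "real \<Rightarrow> real"
  assumes t: "0 \<le> t" "t \<le> 1" and I: "(f has_integral I) {0..1}" and J: "(f has_integral J) {t..1}"
  shows "((\<lambda>x. f x * (A + B * heaviside (x - t))) has_integral (A * I + B * J)) {0..1}"
proof -
  have J': "((\<lambda>x. if x \<in> {t..1} then f x else 0) has_integral J) {0..1}"
    using has_integral_restrict_closed_subinterval[of f J t 1 0 1] J t by simp
  have h: "((\<lambda>x. A * f x + B * (if x \<in> {t..1} then f x else 0)) has_integral (A * I + B * J)) {0..1}"
    by (intro has_integral_add has_integral_mult_right I J')
  show ?thesis
    by (rule has_integral_spike_finite[where S="{t}", OF _ _ h]) (auto simp: heaviside_def algebra_simps)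
qed

lemma integral_pos_continuous:
  fixes f :: "real \<Rightarrow> real"
  assumes "a < b" "continuous_on {a..b} f" "\<And>x. x \<in> {a..b} \<Longrightarrow> f x \<ge> 0"
    "c \<in> {a..b}" "f c > 0"
  shows "integral {a..b} f > 0"
proof -
  have "integral {a..b} f \<ge> 0"
    using assms by (intro integral_nonneg integrable_continuous_real) auto
  moreover have "integral {a..b} f \<noteq> 0"
    using integral_cbox_eq_0_iff[of a b f] assms by auto
  ultimately show ?thesis by linarith
qed

lemma ftc_interior:
  fixes F g :: "real \<Rightarrow> real"
  assumes "continuous_on {c..d} F" "\<And>x. c < x \<Longrightarrow> x < d \<Longrightarrow> (F has_real_derivative g x) (at x)"
    "c \<le> a" "a \<le> b" "b \<le> d"
  shows "(g has_integral F b - F a) {a..b}"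
  by (rule fundamental_theorem_of_calculus_interior)
     (use assms in \<open>auto simp: has_real_derivative_iff_has_vector_derivative[symmetric]
        intro: continuous_on_subset[OF assms(1)]\<close>)

lemma poly_altdef_N:
  fixes p :: "real poly"
  assumes "degree p \<le> N" shows "poly p x = (\<Sum>i\<le>N. coeff p i * x ^ i)"
proof -
  have "(\<Sum>i\<le>degree p. coeff p i * x ^ i) = (\<Sum>i\<le>N. coeff p i * x ^ i)"
    by (rule sum.mono_neutral_left) (use assms in \<open>auto simp: coeff_eq_0\<close>)
  then show ?thesis by (simp add: poly_altdef)
qed

lemma coeff_mult_cont:
  fixes p q :: "real \<Rightarrow> real poly" and t :: real
  assumes "\<And>i. continuous (at t) (\<lambda>s. coeff (p s) i)" "\<And>i. continuous (at t) (\<lambda>s. coeff (q s) i)"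
  shows "continuous (at t) (\<lambda>s. coeff (p s * q s) k)"
  unfolding coeff_mult by (intro continuous_sum continuous_mult assms)

section \<open>The functional of the weight w(x;t)\<close>

text \<open>The Jacobi weight x^\<alpha>(1-x)^\<beta>, its polynomial integrals over [l,u], and the functional
  L_t(q) = A int_0^1 q w0 + B int_t^1 q w0 of the weight w(x;t).\<close>
definition jwt :: "real \<Rightarrow> real \<Rightarrow> real \<Rightarrow> real" where
  "jwt a b x = x powr a * (1 - x) powr b"
definition jint :: "real \<Rightarrow> real \<Rightarrow> real \<Rightarrow> real \<Rightarrow> real poly \<Rightarrow> real" where
  "jint a b l u q = integral {l..u} (\<lambda>x. poly q x * jwt a b x)"
definition Lw :: "real \<Rightarrow> real \<Rightarrow> real \<Rightarrow> real \<Rightarrow> real \<Rightarrow> real poly \<Rightarrow> real" where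
  "Lw a b A B t q = A * jint a b 0 1 q + B * jint a b t 1 q"

context
  fixes \<alpha> \<beta> :: real
  assumes ab: "\<alpha> > 0" "\<beta> > 0"
begin

text \<open>Basic properties of the Jacobi weight w0 (continuity at the end points uses \<alpha>, \<beta> > 0).\<close>
lemma jwt_cont: "continuous_on {0..1} (jwt \<alpha> \<beta>)"
  unfolding jwt_def using ab
  by (intro continuous_intros continuous_on_powr') auto

lemma jwt_pos: "0 < x \<Longrightarrow> x < 1 \<Longrightarrow> jwt \<alpha> \<beta> x > 0"
  by (simp add: jwt_def)

lemma jwt_nonneg: "jwt \<alpha> \<beta> x \<ge> 0"
  by (simp add: jwt_def)

lemma poly_jwt_cont: "continuous_on {0..1} (\<lambda>x. poly q x * jwt \<alpha> \<beta> x)"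
  by (intro continuous_intros jwt_cont)

lemma jint_has_integral:
  assumes "0 \<le> l" "u \<le> 1"
  shows "((\<lambda>x. poly q x * jwt \<alpha> \<beta> x) has_integral jint \<alpha> \<beta> l u q) {l..u}"
proof -
  have "continuous_on {l..u} (\<lambda>x. poly q x * jwt \<alpha> \<beta> x)"
    by (rule continuous_on_subset[OF poly_jwt_cont]) (use assms in auto)
  then show ?thesis unfolding jint_def
    using integrable_continuous_real integrable_integral by blast
qed

lemma jint_add: "0 \<le> l \<Longrightarrow> u \<le> 1 \<Longrightarrow> jint \<alpha> \<beta> l u (p + q) = jint \<alpha> \<beta> l u p + jint \<alpha> \<beta> l u q"
  using has_integral_add[OF jint_has_integral[of l u p] jint_has_integral[of l u q]]
  by (intro has_integral_unique[OF jint_has_integral[of l u "p+q"]]) (auto simp: algebra_simps)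

lemma jint_smult: "0 \<le> l \<Longrightarrow> u \<le> 1 \<Longrightarrow> jint \<alpha> \<beta> l u (Polynomial.smult c p) = c * jint \<alpha> \<beta> l u p"
  using has_integral_mult_right[OF jint_has_integral[of l u p], of c]
  by (intro has_integral_unique[OF jint_has_integral[of l u "Polynomial.smult c p"]]) (auto simp: algebra_simps)

lemma Lw_add: "0 \<le> t \<Longrightarrow> Lw \<alpha> \<beta> A B t (p + q) = Lw \<alpha> \<beta> A B t p + Lw \<alpha> \<beta> A B t q"
  by (simp add: Lw_def jint_add algebra_simps)

lemma Lw_smult: "0 \<le> t \<Longrightarrow> Lw \<alpha> \<beta> A B t (Polynomial.smult c p) = c * Lw \<alpha> \<beta> A B t p"
  by (simp add: Lw_def jint_smult algebra_simps)

lemma Lw_has_integral: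
  assumes "0 \<le> t" "t \<le> 1"
  shows "((\<lambda>x. poly q x * wgt \<alpha> \<beta> A B t x) has_integral Lw \<alpha> \<beta> A B t q) {0..1}"
  using has_integral_times_step[OF assms jint_has_integral[of 0 1 q] jint_has_integral[of t 1 q], of A B] assms
  by (simp add: Lw_def wgt_def jwt_def mult.assoc)

lemma Lw_integral:
  assumes "0 \<le> t" "t \<le> 1"
  shows "integral {0..1} (\<lambda>x. poly q x * wgt \<alpha> \<beta> A B t x) = Lw \<alpha> \<beta> A B t q"
  using Lw_has_integral[OF assms] by (rule integral_unique)

text \<open>Nonzero squares have positive w0-integral over nondegenerate subintervals,
  since a nonzero polynomial has only finitely many roots.\<close>
lemma jint_sq_pos:
  assumes "0 \<le> l" "l < u" "u \<le> 1" "q \<noteq> 0"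
  shows "jint \<alpha> \<beta> l u (q * q) > 0"
proof -
  have "finite {x. poly q x = 0}" using poly_roots_finite assms by blast
  moreover have "infinite {l<..<u}" using assms by simp
  ultimately obtain c where c: "c \<in> {l<..<u}" "poly q c \<noteq> 0"
    by (metis (mono_tags, lifting) infinite_super mem_Collect_eq subsetI)
  have cont: "continuous_on {l..u} (\<lambda>x. poly (q * q) x * jwt \<alpha> \<beta> x)"
    by (rule continuous_on_subset[OF poly_jwt_cont]) (use assms in auto)
  have "0 < poly q c * poly q c" using c(2) by (auto simp add: zero_less_mult_iff linorder_neq_iff)
  then have pc: "0 < poly (q * q) c * jwt \<alpha> \<beta> c" using jwt_pos[of c] c assms by simp
  show ?thesis unfolding jint_def
    by (rule integral_pos_continuous[OF _ cont, of c])
       (use assms c jwt_nonneg pc in \<open>auto intro!: mult_nonneg_nonneg\<close>)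
qed

lemma jint_combine:
  assumes "0 \<le> l" "l \<le> m" "m \<le> u" "u \<le> 1"
  shows "jint \<alpha> \<beta> l u q = jint \<alpha> \<beta> l m q + jint \<alpha> \<beta> m u q"
proof -
  have "(\<lambda>x. poly q x * jwt \<alpha> \<beta> x) integrable_on {l..u}"
    by (intro integrable_continuous_real continuous_on_subset[OF poly_jwt_cont[of q]]) (use assms in auto)
  then show ?thesis unfolding jint_def using Henstock_Kurzweil_Integration.integral_combine[where a=l and c=m and b=u] assms by metis
qed

text \<open>Positive definiteness of L_t: on [0,t] the weight is A w0, on [t,1] it is (A+B) w0.\<close>
lemma Lw_pos:
  assumes AB: "A \<ge> 0" "A + B \<ge> 0" "\<not> (A = 0 \<and> B = 0)" and t: "0 < t" "t < 1" and q: "q \<noteq> 0"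
  shows "Lw \<alpha> \<beta> A B t (q * q) > 0"
proof -
  have eq: "Lw \<alpha> \<beta> A B t (q * q) = A * jint \<alpha> \<beta> 0 t (q * q) + (A + B) * jint \<alpha> \<beta> t 1 (q * q)"
    unfolding Lw_def using jint_combine[of 0 t 1 "q*q"] t by (simp add: algebra_simps)
  have p1: "jint \<alpha> \<beta> 0 t (q * q) > 0" "jint \<alpha> \<beta> t 1 (q * q) > 0"
    using jint_sq_pos q t by auto
  show ?thesis
  proof (cases "A = 0")
    case True then have "B > 0" using AB by auto
    then show ?thesis using eq p1 True by simp
  next
    case False then have "A > 0" using AB by auto
    then show ?thesis using eq p1 AB
      by (metis add_pos_nonneg mult_nonneg_nonneg mult_pos_pos less_eq_real_def)
  qed
qed

lemma jint_expand:
  assumes "0 \<le> l" "u \<le> 1" "degree q \<le> N"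
  shows "jint \<alpha> \<beta> l u q = (\<Sum>k\<le>N. coeff q k * jint \<alpha> \<beta> l u (monom 1 k))"
proof -
  have "((\<lambda>x. \<Sum>k\<le>N. coeff q k * (poly (monom 1 k) x * jwt \<alpha> \<beta> x)) has_integral
          (\<Sum>k\<le>N. coeff q k * jint \<alpha> \<beta> l u (monom 1 k))) {l..u}"
    by (intro has_integral_sum has_integral_mult_right jint_has_integral assms) auto
  moreover have "(\<lambda>x. \<Sum>k\<le>N. coeff q k * (poly (monom 1 k) x * jwt \<alpha> \<beta> x)) = (\<lambda>x. poly q x * jwt \<alpha> \<beta> x)"
    using poly_altdef_N[OF assms(3)] by (auto simp: poly_monom sum_distrib_right sum_distrib_left mult_ac)
  ultimately show ?thesis using jint_has_integral[OF assms(1,2), of q] has_integral_unique by metis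
qed

lemma jint_deriv:
  assumes t: "0 < t" "t < 1"
  shows "((\<lambda>s. jint \<alpha> \<beta> s 1 q) has_real_derivative - (poly q t * jwt \<alpha> \<beta> t)) (at t)"
proof -
  let ?f = "\<lambda>x. poly q x * jwt \<alpha> \<beta> x"
  have "((\<lambda>u. integral {0..u} ?f) has_vector_derivative ?f t) (at t within {0..1})"
    by (rule integral_has_vector_derivative[OF poly_jwt_cont]) (use t in auto)
  then have "((\<lambda>u. integral {0..u} ?f) has_real_derivative ?f t) (at t)"
    using t by (simp add: at_within_Icc_at has_real_derivative_iff_has_vector_derivative)
  then have d: "((\<lambda>u. jint \<alpha> \<beta> 0 1 q - integral {0..u} ?f) has_real_derivative - ?f t) (at t)"
    by (intro derivative_eq_intros) auto
  show ?thesis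
  proof (rule has_field_derivative_transform_within_open[OF d, of "{0<..<1}"])
    fix s :: real assume "s \<in> {0<..<1}"
    then show "jint \<alpha> \<beta> 0 1 q - integral {0..s} ?f = jint \<alpha> \<beta> s 1 q"
      using jint_combine[of 0 s 1 q] by (simp add: jint_def)
  qed (use t in auto)
qed

lemma jint_cont: "0 < t \<Longrightarrow> t < 1 \<Longrightarrow> continuous (at t) (\<lambda>s. jint \<alpha> \<beta> s 1 q)"
  using jint_deriv DERIV_isCont by blast

lemma Lw_expand:
  assumes "0 \<le> s" "s \<le> 1" "degree q \<le> N"
  shows "Lw \<alpha> \<beta> A B s q = (\<Sum>k\<le>N. coeff q k * Lw \<alpha> \<beta> A B s (monom 1 k))"
  unfolding Lw_def using jint_expand[OF _ _ assms(3)] assms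
  by (simp add: sum.distrib sum_distrib_left algebra_simps)

lemma Lw_cont:
  assumes t: "0 < t" "t < 1" and deg: "\<And>s. degree (Q s) \<le> N"
    and c: "\<And>k. continuous (at t) (\<lambda>s. coeff (Q s) k)"
  shows "continuous (at t) (\<lambda>s. Lw \<alpha> \<beta> A B s (Q s))"
proof -
  have ev: "eventually (\<lambda>s. (\<Sum>k\<le>N. coeff (Q s) k * (A * jint \<alpha> \<beta> 0 1 (monom 1 k) + B * jint \<alpha> \<beta> s 1 (monom 1 k)))
      = Lw \<alpha> \<beta> A B s (Q s)) (nhds t)"
    by (rule eventually_mono[OF eventually_nhds_in_open[of "{0<..<1}" t]])
       (use t in \<open>auto simp: Lw_expand[OF _ _ deg] jint_expand[OF _ _ deg] Lw_def sum_distrib_left sum.distrib[symmetric] algebra_simps\<close>)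
  have "isCont (\<lambda>s. \<Sum>k\<le>N. coeff (Q s) k * (A * jint \<alpha> \<beta> 0 1 (monom 1 k) + B * jint \<alpha> \<beta> s 1 (monom 1 k))) t"
    by (intro continuous_intros c jint_cont t)
  then show ?thesis using isCont_cong[OF ev] by simp
qed

lemma Lw_diff_lim:
  assumes t: "0 < t" "t < 1" and deg: "\<And>s. degree (Q s) \<le> N"
    and c: "\<And>k. continuous (at t) (\<lambda>s. coeff (Q s) k)"
  shows "((\<lambda>s. (Lw \<alpha> \<beta> A B s (Q s) - Lw \<alpha> \<beta> A B t (Q s)) / (s - t))
           \<longlongrightarrow> - B * (poly (Q t) t * jwt \<alpha> \<beta> t)) (at t)"
proof -
  have dk: "((\<lambda>s. (jint \<alpha> \<beta> s 1 (monom 1 k) - jint \<alpha> \<beta> t 1 (monom 1 k)) / (s - t))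
        \<longlongrightarrow> - (t ^ k * jwt \<alpha> \<beta> t)) (at t)" for k
    using jint_deriv[OF t, of "monom 1 k"] by (simp add: has_field_derivative_iff poly_monom)
  have ck: "((\<lambda>s. coeff (Q s) k) \<longlongrightarrow> coeff (Q t) k) (at t)" for k
    using c[of k] by (simp add: continuous_at)
  have "((\<lambda>s. B * (\<Sum>k\<le>N. coeff (Q s) k * ((jint \<alpha> \<beta> s 1 (monom 1 k) - jint \<alpha> \<beta> t 1 (monom 1 k)) / (s - t))))
      \<longlongrightarrow> B * (\<Sum>k\<le>N. coeff (Q t) k * (- (t ^ k * jwt \<alpha> \<beta> t)))) (at t)"
    by (intro tendsto_intros ck dk)
  also have "B * (\<Sum>k\<le>N. coeff (Q t) k * (- (t ^ k * jwt \<alpha> \<beta> t))) = - B * (poly (Q t) t * jwt \<alpha> \<beta> t)"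
    using poly_altdef_N[OF deg, of t t] by (simp add: sum_distrib_left sum_negf mult_ac)
  finally have L: "((\<lambda>s. B * (\<Sum>k\<le>N. coeff (Q s) k * ((jint \<alpha> \<beta> s 1 (monom 1 k) - jint \<alpha> \<beta> t 1 (monom 1 k)) / (s - t))))
      \<longlongrightarrow> - B * (poly (Q t) t * jwt \<alpha> \<beta> t)) (at t)" .
  have ev0: "eventually (\<lambda>s. s \<in> {0<..<1}) (at t)"
    using eventually_at_in_open'[of "{0<..<1}" t] t by simp
  have ev: "eventually (\<lambda>s. B * (\<Sum>k\<le>N. coeff (Q s) k * ((jint \<alpha> \<beta> s 1 (monom 1 k) - jint \<alpha> \<beta> t 1 (monom 1 k)) / (s - t)))
      = (Lw \<alpha> \<beta> A B s (Q s) - Lw \<alpha> \<beta> A B t (Q s)) / (s - t)) (at t)"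
    using ev0
  proof (eventually_elim)
    case (elim s)
    have "Lw \<alpha> \<beta> A B s (Q s) - Lw \<alpha> \<beta> A B t (Q s) = B * (jint \<alpha> \<beta> s 1 (Q s) - jint \<alpha> \<beta> t 1 (Q s))"
      by (simp add: Lw_def algebra_simps)
    also have "\<dots> = B * (\<Sum>k\<le>N. coeff (Q s) k * (jint \<alpha> \<beta> s 1 (monom 1 k) - jint \<alpha> \<beta> t 1 (monom 1 k)))"
      using elim t by (simp add: jint_expand[OF _ _ deg] sum_subtractf algebra_simps)
    finally show ?case by (simp add: sum_divide_distrib[symmetric])
  qed
  show ?thesis using Lim_transform_eventually[OF L ev] .
qed

lemma jwt_deriv:
  assumes "0 < x" "x < 1"
  shows "(jwt \<alpha> \<beta> has_real_derivative (\<alpha> * (1 - x) - \<beta> * x) * jwt \<alpha> \<beta> x / (x * (1 - x))) (at x)"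
proof -
  have "((\<lambda>x. x powr \<alpha> * (1 - x) powr \<beta>) has_real_derivative
     \<alpha> * x powr (\<alpha> - 1) * (1 - x) powr \<beta> + x powr \<alpha> * (\<beta> * (1 - x) powr (\<beta> - 1) * (- 1))) (at x)"
    using assms by (auto intro!: derivative_eq_intros)
  moreover have "\<alpha> * x powr (\<alpha> - 1) * (1 - x) powr \<beta> + x powr \<alpha> * (\<beta> * (1 - x) powr (\<beta> - 1) * (- 1))
      = (\<alpha> * (1 - x) - \<beta> * x) * jwt \<alpha> \<beta> x / (x * (1 - x))"
    using assms by (simp add: jwt_def powr_diff field_simps)
  ultimately show ?thesis unfolding jwt_def by simp
qed

text \<open>The same with the derivative as a parameter, as needed for rule-based differentiation.\<close>
lemma jwt_deriv_eq:
  "0 < x \<Longrightarrow> x < 1 \<Longrightarrow> D = (\<alpha> * (1 - x) - \<beta> * x) * jwt \<alpha> \<beta> x / (x * (1 - x)) \<Longrightarrow>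
    (jwt \<alpha> \<beta> has_real_derivative D) (at x)"
  using jwt_deriv by simp

lemma jwt_0: "jwt \<alpha> \<beta> 0 = 0" and jwt_1: "jwt \<alpha> \<beta> 1 = 0"
  using ab by (auto simp: jwt_def)

text \<open>If q w0 = F' with F(0) = F(1) = 0, then L_t(q) = -B F(t): only the jump contributes.\<close>
lemma Lw_exact_derivative:
  assumes t: "0 \<le> t" "t \<le> 1" and F: "continuous_on {0..1} F" "F 0 = 0" "F 1 = 0"
    and d: "\<And>x. 0 < x \<Longrightarrow> x < 1 \<Longrightarrow> (F has_real_derivative poly T x * jwt \<alpha> \<beta> x) (at x)"
  shows "Lw \<alpha> \<beta> A B t T = - B * F t"
proof -
  have "jint \<alpha> \<beta> l u T = F u - F l" if "0 \<le> l" "l \<le> u" "u \<le> 1" for l u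
    using ftc_interior[OF F(1) d that] jint_has_integral[of l u T] that
    by (metis has_integral_unique)
  then show ?thesis using t F by (simp add: Lw_def)
qed

text \<open>Pearson's equation (x(1-x) w0)' = ((\<alpha>+1) - (\<alpha>+\<beta>+2)x) w0 applied to F = q x(1-x) w0.\<close>
lemma Lw_pearson:
  assumes t: "0 \<le> t" "t \<le> 1"
  shows "Lw \<alpha> \<beta> A B t (pderiv q * [:0, 1, -1:] + q * [:\<alpha> + 1, - (\<alpha> + \<beta> + 2):])
       = - B * (poly q t * (t * (1 - t) * jwt \<alpha> \<beta> t))"
proof (rule Lw_exact_derivative[OF t])
  show "continuous_on {0..1} (\<lambda>x. poly q x * (x * (1 - x) * jwt \<alpha> \<beta> x))"
    by (intro continuous_intros jwt_cont)
  show "poly q 0 * (0 * (1 - 0) * jwt \<alpha> \<beta> 0) = 0" "poly q 1 * (1 * (1 - 1) * jwt \<alpha> \<beta> 1) = 0"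
    by simp_all
  fix x :: real assume x: "0 < x" "x < 1"
  have "((\<lambda>x. poly q x * (x * (1 - x) * jwt \<alpha> \<beta> x)) has_real_derivative
     poly (pderiv q) x * (x * (1 - x) * jwt \<alpha> \<beta> x) + poly q x * ((1 * (1 - x) + x * (- 1)) * jwt \<alpha> \<beta> x
       + x * (1 - x) * ((\<alpha> * (1 - x) - \<beta> * x) * jwt \<alpha> \<beta> x / (x * (1 - x))))) (at x)"
    by (intro derivative_eq_intros jwt_deriv_eq x poly_DERIV) auto
  moreover have "poly (pderiv q) x * (x * (1 - x) * jwt \<alpha> \<beta> x) + poly q x * ((1 * (1 - x) + x * (- 1)) * jwt \<alpha> \<beta> x
       + x * (1 - x) * ((\<alpha> * (1 - x) - \<beta> * x) * jwt \<alpha> \<beta> x / (x * (1 - x))))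
     = poly (pderiv q * [:0, 1, -1:] + q * [:\<alpha> + 1, - (\<alpha> + \<beta> + 2):]) x * jwt \<alpha> \<beta> x"
    using x by (simp add: field_simps)
  ultimately show "((\<lambda>x. poly q x * (x * (1 - x) * jwt \<alpha> \<beta> x)) has_real_derivative
     poly (pderiv q * [:0, 1, -1:] + q * [:\<alpha> + 1, - (\<alpha> + \<beta> + 2):]) x * jwt \<alpha> \<beta> x) (at x)" by simp
qed

text \<open>The integral defining y_n: for F = -f x w0 one has
  F' = \<beta> f/(1-x) w0 - ((\<alpha>+\<beta>+1) f + x f') w0, and F vanishes at 0 and 1.\<close>
lemma has_integral_beta_quotient:
  assumes t: "0 \<le> t" "t \<le> 1"
  shows "((\<lambda>y. (\<beta> * poly f y / (1 - y) * jwt \<alpha> \<beta> y) * (A + B * heaviside (y - t))) has_integral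
     Lw \<alpha> \<beta> A B t (Polynomial.smult (\<alpha> + \<beta> + 1) f + [:0, 1:] * pderiv f)
       + B * (poly f t * (t * jwt \<alpha> \<beta> t))) {0..1}"
proof -
  define S where "S = Polynomial.smult (\<alpha> + \<beta> + 1) f + [:0, 1:] * pderiv f"
  define \<Phi> where "\<Phi> x = - (poly f x * (x * jwt \<alpha> \<beta> x))" for x
  define h where "h y = \<beta> * poly f y / (1 - y) * jwt \<alpha> \<beta> y" for y
  have cont: "continuous_on {0..1} \<Phi>" unfolding \<Phi>_def
    by (intro continuous_intros jwt_cont)
  have der: "(\<Phi> has_real_derivative h x - poly S x * jwt \<alpha> \<beta> x) (at x)" if x: "0 < x" "x < 1" for x
  proof -
    have "(\<Phi> has_real_derivative - (poly (pderiv f) x * (x * jwt \<alpha> \<beta> x) + poly f x * (1 * jwt \<alpha> \<beta> x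
       + x * ((\<alpha> * (1 - x) - \<beta> * x) * jwt \<alpha> \<beta> x / (x * (1 - x)))))) (at x)"
      unfolding \<Phi>_def by (intro derivative_eq_intros jwt_deriv_eq x poly_DERIV) auto
    moreover have "- (poly (pderiv f) x * (x * jwt \<alpha> \<beta> x) + poly f x * (1 * jwt \<alpha> \<beta> x
       + x * ((\<alpha> * (1 - x) - \<beta> * x) * jwt \<alpha> \<beta> x / (x * (1 - x))))) = h x - poly S x * jwt \<alpha> \<beta> x"
      using x by (simp add: h_def S_def field_simps)
    ultimately show ?thesis by simp
  qed
  have hi: "(h has_integral \<Phi> u - \<Phi> l + jint \<alpha> \<beta> l u S) {l..u}" if "0 \<le> l" "l \<le> u" "u \<le> 1" for l u
  proof -
    have "((\<lambda>x. (h x - poly S x * jwt \<alpha> \<beta> x) + poly S x * jwt \<alpha> \<beta> x) has_integral \<Phi> u - \<Phi> l + jint \<alpha> \<beta> l u S) {l..u}"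
      by (intro has_integral_add ftc_interior[OF cont der that] jint_has_integral) (use that in auto)
    then show ?thesis by simp
  qed
  have "((\<lambda>y. h y * (A + B * heaviside (y - t))) has_integral
        A * (\<Phi> 1 - \<Phi> 0 + jint \<alpha> \<beta> 0 1 S) + B * (\<Phi> 1 - \<Phi> t + jint \<alpha> \<beta> t 1 S)) {0..1}"
    by (rule has_integral_times_step[OF t hi hi]) (use t in auto)
  moreover have "A * (\<Phi> 1 - \<Phi> 0 + jint \<alpha> \<beta> 0 1 S) + B * (\<Phi> 1 - \<Phi> t + jint \<alpha> \<beta> t 1 S)
      = Lw \<alpha> \<beta> A B t S + B * (poly f t * (t * jwt \<alpha> \<beta> t))"
    by (simp add: \<Phi>_def jwt_0 jwt_1 Lw_def algebra_simps)
  ultimately show ?thesis by (simp add: h_def S_def)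
qed

end

section \<open>Orthogonal polynomials of w(x;t) and their dependence on t\<close>

context
  fixes \<alpha> \<beta> A B :: real
  assumes ab: "\<alpha> > 0" "\<beta> > 0" and AB: "A \<ge> 0" "A + B \<ge> 0" "\<not> (A = 0 \<and> B = 0)"
begin

abbreviation "Pt s j \<equiv> gs_poly (Lw \<alpha> \<beta> A B s) j"
abbreviation "ht s j \<equiv> Lw \<alpha> \<beta> A B s (Pt s j * Pt s j)"

lemma posdef_Lw: "0 < t \<Longrightarrow> t < 1 \<Longrightarrow> posdef_functional (Lw \<alpha> \<beta> A B t)"
  by unfold_locales (use ab AB in \<open>auto simp: Lw_add Lw_smult Lw_pos\<close>)

lemma opoly_eq:
  assumes t: "0 < t" "t < 1"
  shows "opoly \<alpha> \<beta> A B t n = gs_poly (Lw \<alpha> \<beta> A B t) n"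
proof -
  interpret posdef_functional "Lw \<alpha> \<beta> A B t" using posdef_Lw t .
  have int: "integral {0..1} (\<lambda>x. poly p x * x ^ m * wgt \<alpha> \<beta> A B t x) = Lw \<alpha> \<beta> A B t (p * monom 1 m)"
    for p m
    using Lw_integral[OF ab, of t "p * monom 1 m" A B] t by (simp add: poly_monom)
  show ?thesis unfolding opoly_def
  proof (rule the_equality)
    show "degree (P n) = n \<and> coeff (P n) n = 1 \<and>
      (\<forall>m<n. integral {0..1} (\<lambda>x. poly (P n) x * x ^ m * wgt \<alpha> \<beta> A B t x) = 0)"
      using gs_degree gs_lead_coeff gs_orth_monom by (simp add: int)
  next
    fix p assume "degree p = n \<and> coeff p n = 1 \<and>
      (\<forall>m<n. integral {0..1} (\<lambda>x. poly p x * x ^ m * wgt \<alpha> \<beta> A B t x) = 0)"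
    then show "p = P n" using gs_unique[of p n] by (simp add: int)
  qed
qed

lemma hnorm_eq:
  assumes t: "0 < t" "t < 1"
  shows "hnorm \<alpha> \<beta> A B t n = Lw \<alpha> \<beta> A B t (gs_poly (Lw \<alpha> \<beta> A B t) n * gs_poly (Lw \<alpha> \<beta> A B t) n)"
  unfolding hnorm_def opoly_eq[OF t]
  using Lw_integral[OF ab, of t "gs_poly (Lw \<alpha> \<beta> A B t) n * gs_poly (Lw \<alpha> \<beta> A B t) n" A B] t
  by (simp add: power2_eq_square)

lemma moment_eq:
  assumes t: "0 < t" "t < 1"
  shows "moment \<alpha> \<beta> A B t i = Lw \<alpha> \<beta> A B t (monom 1 i)"
  unfolding moment_def
  using Lw_integral[OF ab, of t "monom 1 i" A B] t by (simp add: poly_monom)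

lemma hankel_prod:
  assumes t: "0 < t" "t < 1"
  shows "hankelD \<alpha> \<beta> A B t n = (\<Prod>j<n. ht t j)"
proof -
  interpret posdef_functional "Lw \<alpha> \<beta> A B t" using posdef_Lw[OF t] .
  have "hankelD \<alpha> \<beta> A B t n = det (mat n n (\<lambda>(j,k). Lw \<alpha> \<beta> A B t (monom 1 (j + k))))"
    by (simp add: hankelD_def moment_eq[OF t])
  also have "\<dots> = (\<Prod>j<n. ht t j)" by (rule hankel_det_prod)
  finally show ?thesis .
qed

lemma gs_coeff_continuous:
  assumes t: "0 < t" "t < 1"
  shows "continuous (at t) (\<lambda>s. coeff (gs_poly (Lw \<alpha> \<beta> A B s) j) i)"
proof (induction j arbitrary: i rule: less_induct)
  case (less j)
  show ?case
  proof (cases j)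
    case 0 then show ?thesis by simp
  next
    case (Suc n)
    interpret posdef_functional "Lw \<alpha> \<beta> A B t" using posdef_Lw[OF t] .
    have cj: "continuous (at t) (\<lambda>s. coeff (gs_poly (Lw \<alpha> \<beta> A B s) m) k)" if "m \<le> n" for m k
      using less Suc that by auto
    have num: "continuous (at t) (\<lambda>s. Lw \<alpha> \<beta> A B s (monom 1 (Suc n) * gs_poly (Lw \<alpha> \<beta> A B s) m))"
      if "m \<le> n" for m
      by (rule Lw_cont[OF ab t, where N="Suc n + m"])
         (auto intro!: coeff_mult_cont cj that order.trans[OF degree_mult_le] add_mono gs_degree_le
               simp: degree_monom_eq)
    have den: "continuous (at t) (\<lambda>s. Lw \<alpha> \<beta> A B s (gs_poly (Lw \<alpha> \<beta> A B s) m * gs_poly (Lw \<alpha> \<beta> A B s) m))"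
      if "m \<le> n" for m
      by (rule Lw_cont[OF ab t, where N="m + m"])
         (auto intro!: coeff_mult_cont cj that order.trans[OF degree_mult_le] add_mono gs_degree_le)
    have "continuous (at t) (\<lambda>s. coeff (monom 1 (Suc n)) i -
        (\<Sum>m\<le>n. Lw \<alpha> \<beta> A B s (monom 1 (Suc n) * gs_poly (Lw \<alpha> \<beta> A B s) m) /
                 Lw \<alpha> \<beta> A B s (gs_poly (Lw \<alpha> \<beta> A B s) m * gs_poly (Lw \<alpha> \<beta> A B s) m) * coeff (gs_poly (Lw \<alpha> \<beta> A B s) m) i))"
      using h_pos by (intro continuous_intros num den cj) (auto simp: less_imp_neq[symmetric])
    then show ?thesis using Suc by (simp add: gs_poly.simps coeff_diff coeff_sum)
  qed
qed

text \<open>h_j(s) = L_s(P_j(s) P_j(u)) for every u, as P_j(u) - P_j(s) has degree below j.\<close>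
lemma ht_mixed:
  assumes s: "0 < s" "s < 1"
  shows "ht s j = Lw \<alpha> \<beta> A B s (Pt s j * Pt u j)"
proof -
  interpret posdef_functional "Lw \<alpha> \<beta> A B s" using posdef_Lw[OF s] .
  have "Lw \<alpha> \<beta> A B s (Pt s j * (Pt u j - Pt s j)) = 0"
    by (intro gs_orth_lower_degree) (metis gs_diff_coeff coeff_minus minus_diff_eq neg_equal_0_iff_equal)
  then show ?thesis by (simp add: right_diff_distrib L_diff)
qed

lemma ht_deriv:
  assumes t: "0 < t" "t < 1"
  shows "((\<lambda>s. ht s j) has_real_derivative - B * ((poly (Pt t j) t)\<^sup>2 * jwt \<alpha> \<beta> t)) (at t)"
proof -
  have lim: "((\<lambda>s. (Lw \<alpha> \<beta> A B s (Pt s j * Pt t j) - Lw \<alpha> \<beta> A B t (Pt s j * Pt t j)) / (s - t))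
           \<longlongrightarrow> - B * (poly (Pt t j * Pt t j) t * jwt \<alpha> \<beta> t)) (at t)"
    by (rule Lw_diff_lim[OF ab t, where N="j + j"])
       (auto intro!: coeff_mult_cont gs_coeff_continuous t order.trans[OF degree_mult_le] add_mono gs_degree_le)
  have ev0: "eventually (\<lambda>s. s \<in> {0<..<1}) (at t)"
    using eventually_at_in_open'[of "{0<..<1}" t] t by simp
  have ev: "eventually (\<lambda>s. (Lw \<alpha> \<beta> A B s (Pt s j * Pt t j) - Lw \<alpha> \<beta> A B t (Pt s j * Pt t j)) / (s - t)
     = (ht s j - ht t j) / (s - t)) (at t)"
    using ev0
  proof eventually_elim
    case (elim s)
    then show ?case using ht_mixed[of s j "t"] ht_mixed[OF t, of j s] by (simp add: mult.commute)
  qed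
  show ?thesis unfolding has_field_derivative_iff
    using Lim_transform_eventually[OF lim ev] by (simp add: power2_eq_square)
qed

text \<open>Since P_n(x;s) - P_n(x;t) - c P_{n-1}(x;t) has degree < n-1, where c is the change of
  the subleading coefficient, orthogonality expresses c through L_s - L_t.\<close>
lemma subcoeff_difference:
  assumes s: "0 < s" "s < 1" and t: "0 < t" "t < 1" and n: "n = Suc m"
  shows "(coeff (Pt s n) m - coeff (Pt t n) m) * ht t m
         = Lw \<alpha> \<beta> A B t (Pt s n * Pt t m) - Lw \<alpha> \<beta> A B s (Pt s n * Pt t m)"
proof -
  interpret S: posdef_functional "Lw \<alpha> \<beta> A B s" using posdef_Lw[OF s] .
  interpret T: posdef_functional "Lw \<alpha> \<beta> A B t" using posdef_Lw[OF t] .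
  have orth_s: "Lw \<alpha> \<beta> A B s (Pt s n * Pt t m) = 0"
    by (intro S.gs_orth_lower_degree) (auto simp: n intro!: gs_coeff_above)
  define c where "c = coeff (Pt s n) m - coeff (Pt t n) m"
  define D where "D = Pt s n - Pt t n - Polynomial.smult c (Pt t m)"
  have "\<forall>k\<ge>m. coeff D k = 0"
  proof (intro allI impI)
    fix k assume "m \<le> k"
    then consider "k = m" | "k \<ge> n" using n by linarith
    then show "coeff D k = 0"
    proof cases
      case 1 then show ?thesis by (simp add: D_def c_def gs_lead_coeff)
    next
      case 2 then show ?thesis
        using gs_diff_coeff[OF 2, of "Lw \<alpha> \<beta> A B s" "Lw \<alpha> \<beta> A B t"] gs_coeff_above[of m k] n
        by (simp add: D_def)
    qed
  qed
  then have "Lw \<alpha> \<beta> A B t (Pt t m * D) = 0" by (rule T.gs_orth_lower_degree)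
  then have "Lw \<alpha> \<beta> A B t (Pt t m * Pt s n) = c * ht t m"
    using T.gs_orth[of m n] n
    by (simp add: D_def right_diff_distrib T.L_diff T.L_smult mult.commute)
  then show ?thesis using orth_s by (simp add: c_def mult.commute)
qed

lemma subcoeff_deriv:
  assumes t: "0 < t" "t < 1" and n: "n = Suc m"
  shows "((\<lambda>s. coeff (Pt s n) m) has_real_derivative
      B * (poly (Pt t n) t * poly (Pt t m) t * jwt \<alpha> \<beta> t) / ht t m) (at t)"
proof -
  interpret T: posdef_functional "Lw \<alpha> \<beta> A B t" using posdef_Lw[OF t] .
  have hpos: "ht t m > 0" using T.h_pos .
  let ?Q = "\<lambda>s. Pt s n * Pt t m"
  have "((\<lambda>s. (Lw \<alpha> \<beta> A B s (?Q s) - Lw \<alpha> \<beta> A B t (?Q s)) / (s - t))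
           \<longlongrightarrow> - B * (poly (?Q t) t * jwt \<alpha> \<beta> t)) (at t)"
    by (rule Lw_diff_lim[OF ab t, where N="n + m"])
       (auto intro!: coeff_mult_cont gs_coeff_continuous t order.trans[OF degree_mult_le] add_mono gs_degree_le)
  then have lim: "((\<lambda>s. - ((Lw \<alpha> \<beta> A B s (?Q s) - Lw \<alpha> \<beta> A B t (?Q s)) / (s - t)) / ht t m)
           \<longlongrightarrow> - (- B * (poly (?Q t) t * jwt \<alpha> \<beta> t)) / ht t m) (at t)"
    using hpos by (intro tendsto_divide tendsto_minus tendsto_const) auto
  have near: "eventually (\<lambda>s. s \<in> {0<..<1}) (at t)"
    using eventually_at_in_open'[of "{0<..<1}" t] t by simp
  have ev: "eventually (\<lambda>s. - ((Lw \<alpha> \<beta> A B s (?Q s) - Lw \<alpha> \<beta> A B t (?Q s)) / (s - t)) / ht t m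
     = (coeff (Pt s n) m - coeff (Pt t n) m) / (s - t)) (at t)"
    using near
  proof eventually_elim
    case (elim s)
    then have "- ((Lw \<alpha> \<beta> A B s (?Q s) - Lw \<alpha> \<beta> A B t (?Q s)) / (s - t)) / ht t m
        = ((coeff (Pt s n) m - coeff (Pt t n) m) * ht t m) / ((s - t) * ht t m)"
      using subcoeff_difference[of s t] t n by (simp add: minus_divide_left)
    also have "\<dots> = (coeff (Pt s n) m - coeff (Pt t n) m) / (s - t)"
      using hpos by (intro nonzero_mult_divide_mult_cancel_right) simp
    finally show ?case .
  qed
  show ?thesis unfolding has_field_derivative_iff
    using Lim_transform_eventually[OF lim ev] by (simp add: mult_ac)
qed

lemma ln_hankel_deriv:
  assumes t: "0 < t" "t < 1"
  shows "((\<lambda>s. ln (hankelD \<alpha> \<beta> A B s n)) has_real_derivative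
     (\<Sum>j<n. - B * ((poly (Pt t j) t)\<^sup>2 * jwt \<alpha> \<beta> t) / ht t j)) (at t)"
proof -
  interpret T: posdef_functional "Lw \<alpha> \<beta> A B t" using posdef_Lw[OF t] .
  have d: "((\<lambda>s. \<Sum>j<n. ln (ht s j)) has_real_derivative
     (\<Sum>j<n. - B * ((poly (Pt t j) t)\<^sup>2 * jwt \<alpha> \<beta> t) / ht t j)) (at t)"
  proof (rule DERIV_sum)
    fix j assume "j \<in> {..<n}"
    have "((\<lambda>s. ln (ht s j)) has_real_derivative
       1 / ht t j * (- B * ((poly (Pt t j) t)\<^sup>2 * jwt \<alpha> \<beta> t))) (at t)"
      by (rule DERIV_chain2[OF DERIV_ln_divide ht_deriv[OF t]]) (rule T.h_pos)
    then show "((\<lambda>s. ln (ht s j)) has_real_derivative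
       - B * ((poly (Pt t j) t)\<^sup>2 * jwt \<alpha> \<beta> t) / ht t j) (at t)" by simp
  qed
  show ?thesis
  proof (rule has_field_derivative_transform_within_open[OF d, of "{0<..<1}"])
    fix s :: real assume s: "s \<in> {0<..<1}"
    interpret S: posdef_functional "Lw \<alpha> \<beta> A B s" using posdef_Lw s by auto
    show "(\<Sum>j<n. ln (ht s j)) = ln (hankelD \<alpha> \<beta> A B s n)"
      using s S.h_pos by (simp add: hankel_prod ln_prod less_imp_neq[symmetric])
  qed (use t in auto)
qed

text \<open>First formula: H_n = -(2n+\<alpha>+\<beta>) p1(n,t) - n(n+\<alpha>), from the Pearson identity for each
  P_j^2 and the telescoping sum.\<close>
lemma Hn_eq_p1:
  assumes t: "0 < t" "t < 1" and n: "n \<ge> 1"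
  shows "Hn \<alpha> \<beta> A B n t = - (2 * real n + \<alpha> + \<beta>) * p1 \<alpha> \<beta> A B n t - real n * (real n + \<alpha>)"
proof -
  interpret T: posdef_functional "Lw \<alpha> \<beta> A B t" using posdef_Lw[OF t] .
  have ibp: "Lw \<alpha> \<beta> A B t (pderiv (T.P j * T.P j) * [:0, 1, -1:] + (T.P j * T.P j) * [:\<alpha> + 1, - (\<alpha> + \<beta> + 2):])
      = - B * ((poly (T.P j) t)\<^sup>2 * (t * (1 - t) * jwt \<alpha> \<beta> t))" for j
    using Lw_pearson[OF ab, where A=A and B=B and t=t and q="T.P j * T.P j"] t by (simp add: power2_eq_square)
  have "Hn \<alpha> \<beta> A B n t = t * (t - 1) * (\<Sum>j<n. - B * ((poly (T.P j) t)\<^sup>2 * jwt \<alpha> \<beta> t) / T.h j)"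
    unfolding Hn_def using DERIV_imp_deriv[OF ln_hankel_deriv[OF t]] by simp
  also have "\<dots> = (\<Sum>j<n. B * ((poly (T.P j) t)\<^sup>2 * (t * (1 - t) * jwt \<alpha> \<beta> t)) / T.h j)"
    unfolding sum_distrib_left
  proof (intro sum.cong refl)
    fix j
    show "t * (t - 1) * (- B * ((poly (T.P j) t)\<^sup>2 * jwt \<alpha> \<beta> t) / T.h j) =
      B * ((poly (T.P j) t)\<^sup>2 * (t * (1 - t) * jwt \<alpha> \<beta> t)) / T.h j"
      by (simp only: times_divide_eq_right) (simp add: algebra_simps)
  qed
  also have "\<dots> = - ((2 * real n + \<alpha> + \<beta>) * T.subcoeff n + real n * (real n + \<alpha>))"
    by (rule T.sum_pearson_telescope[OF ibp])
  also have "T.subcoeff n = p1 \<alpha> \<beta> A B n t"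
    using n by (simp add: T.subcoeff_def p1_def opoly_eq[OF t])
  finally show ?thesis by (simp add: algebra_simps)
qed

lemma p1_has_deriv:
  assumes t: "0 < t" "t < 1" and n: "n \<ge> 1"
  shows "(p1 \<alpha> \<beta> A B n has_real_derivative rn \<alpha> \<beta> A B n t) (at t)"
proof -
  obtain m where m: "n = Suc m" using n by (cases n) auto
  have d: "((\<lambda>s. coeff (Pt s n) m) has_real_derivative
      B * (poly (Pt t n) t * poly (Pt t m) t * jwt \<alpha> \<beta> t) / ht t m) (at t)"
    by (rule subcoeff_deriv[OF t m])
  have "rn \<alpha> \<beta> A B n t = B * (poly (Pt t n) t * poly (Pt t m) t * jwt \<alpha> \<beta> t) / ht t m"
    using m by (simp add: rn_def opoly_eq[OF t] hnorm_eq[OF t] jwt_def mult_ac)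
  then have d': "((\<lambda>s. coeff (Pt s n) m) has_real_derivative rn \<alpha> \<beta> A B n t) (at t)"
    using d by simp
  have eq: "coeff (Pt s n) m = p1 \<alpha> \<beta> A B n s" if s: "s \<in> {0<..<1}" for s
    using m s by (simp add: p1_def opoly_eq)
  show ?thesis
  proof (rule has_field_derivative_transform_within_open[OF d'])
    show "open {0<..<1::real}" by simp
    show "t \<in> {0<..<1}" using t by simp
    show "\<And>s. s \<in> {0<..<1} \<Longrightarrow> coeff (Pt s n) m = p1 \<alpha> \<beta> A B n s" by (rule eq)
  qed
qed

lemma Hn_has_deriv:
  assumes t: "0 < t" "t < 1" and n: "n \<ge> 1"
  shows "(Hn \<alpha> \<beta> A B n has_real_derivative - (2 * real n + \<alpha> + \<beta>) * rn \<alpha> \<beta> A B n t) (at t)"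
proof -
  have d: "((\<lambda>s. - (2 * real n + \<alpha> + \<beta>) * p1 \<alpha> \<beta> A B n s - real n * (real n + \<alpha>)) has_real_derivative
      - (2 * real n + \<alpha> + \<beta>) * rn \<alpha> \<beta> A B n t) (at t)"
    using DERIV_diff[OF DERIV_cmult[OF p1_has_deriv[OF t n], of "- (2 * real n + \<alpha> + \<beta>)"]
        DERIV_const[of "real n * (real n + \<alpha>)"]] by simp
  show ?thesis
    by (rule has_field_derivative_transform_within_open[OF d, of "{0<..<1}"])
       (use t n Hn_eq_p1 in auto)
qed

lemma yn_eq_p1:
  assumes t: "0 < t" "t < 1" and n: "n \<ge> 1"
  shows "yn \<alpha> \<beta> A B n t = - p1 \<alpha> \<beta> A B n t + t * rn \<alpha> \<beta> A B n t"
proof -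
  interpret T: posdef_functional "Lw \<alpha> \<beta> A B t" using posdef_Lw[OF t] .
  obtain m where m: "n = Suc m" using n by (cases n) auto
  define f where "f = T.P n * T.P m"
  have hi: "((\<lambda>y. (\<beta> * poly f y / (1 - y) * jwt \<alpha> \<beta> y) * (A + B * heaviside (y - t))) has_integral
     Lw \<alpha> \<beta> A B t (Polynomial.smult (\<alpha> + \<beta> + 1) f + [:0, 1:] * pderiv f)
       + B * (poly f t * (t * jwt \<alpha> \<beta> t))) {0..1}"
    using has_integral_beta_quotient[OF ab, where A=A and B=B and t=t and f=f] t by simp
  have Lw_f: "Lw \<alpha> \<beta> A B t f = 0" unfolding f_def using T.gs_orth[of n m] m by simp
  have LS: "Lw \<alpha> \<beta> A B t (Polynomial.smult (\<alpha> + \<beta> + 1) f + [:0, 1:] * pderiv f) = - T.subcoeff n * T.h m"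
    using t Lw_f T.L_x_pderiv_consecutive[OF m] by (simp add: Lw_add[OF ab] Lw_smult[OF ab] f_def)
  have hi2: "((\<lambda>y. poly (T.P n) y * poly (T.P m) y / (1 - y) * wgt \<alpha> \<beta> A B t y) has_integral
      (1 / \<beta>) * (- T.subcoeff n * T.h m + B * (poly f t * (t * jwt \<alpha> \<beta> t)))) {0..1}"
  proof -
    have "((\<lambda>y. (1 / \<beta>) * ((\<beta> * poly f y / (1 - y) * jwt \<alpha> \<beta> y) * (A + B * heaviside (y - t)))) has_integral
      (1 / \<beta>) * (- T.subcoeff n * T.h m + B * (poly f t * (t * jwt \<alpha> \<beta> t)))) {0..1}"
      using has_integral_mult_right[OF hi, of "1 / \<beta>"] LS by simp
    moreover have "(\<lambda>y. (1 / \<beta>) * ((\<beta> * poly f y / (1 - y) * jwt \<alpha> \<beta> y) * (A + B * heaviside (y - t))))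
       = (\<lambda>y. poly (T.P n) y * poly (T.P m) y / (1 - y) * wgt \<alpha> \<beta> A B t y)"
      using ab by (auto simp: f_def wgt_def jwt_def)
    ultimately show ?thesis by simp
  qed
  have hpos: "T.h m > 0" by (rule T.h_pos)
  have "yn \<alpha> \<beta> A B n t = \<beta> / T.h m * ((1 / \<beta>) * (- T.subcoeff n * T.h m + B * (poly f t * (t * jwt \<alpha> \<beta> t))))"
    unfolding yn_def opoly_eq[OF t] hnorm_eq[OF t] using m integral_unique[OF hi2] by simp
  also have "\<dots> = - T.subcoeff n + t * (B * (poly (T.P n) t * poly (T.P m) t * jwt \<alpha> \<beta> t) / T.h m)"
    using hpos ab by (simp add: f_def field_simps)
  also have "T.subcoeff n = p1 \<alpha> \<beta> A B n t"
    using m by (simp add: T.subcoeff_def p1_def opoly_eq[OF t])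
  also have "B * (poly (T.P n) t * poly (T.P m) t * jwt \<alpha> \<beta> t) / T.h m = rn \<alpha> \<beta> A B n t"
    using m by (simp add: rn_def opoly_eq[OF t] hnorm_eq[OF t] jwt_def mult_ac)
  finally show ?thesis .
qed

end

theorem theorem3p4:
  fixes \<alpha> \<beta> A B t :: real and n :: nat
  assumes "\<alpha> > 0" and "\<beta> > 0" and "A \<ge> 0" and "A + B \<ge> 0" and "\<not> (A = 0 \<and> B = 0)"
    and "0 < t" and "t < 1" and "n \<ge> 1"
  shows "(\<lambda>s. ln (hankelD \<alpha> \<beta> A B s n)) differentiable (at t)
    \<and> Hn \<alpha> \<beta> A B n t = (2 * real n + \<alpha> + \<beta>) * (yn \<alpha> \<beta> A B n t - t * rn \<alpha> \<beta> A B n t)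
                          - real n * (real n + \<alpha>)
    \<and> Hn \<alpha> \<beta> A B n t = - (2 * real n + \<alpha> + \<beta>) * p1 \<alpha> \<beta> A B n t - real n * (real n + \<alpha>)
    \<and> Hn \<alpha> \<beta> A B n differentiable (at t)
    \<and> rn \<alpha> \<beta> A B n t = - deriv (Hn \<alpha> \<beta> A B n) t / (2 * real n + \<alpha> + \<beta>)
    \<and> yn \<alpha> \<beta> A B n t = (- t * deriv (Hn \<alpha> \<beta> A B n) t + Hn \<alpha> \<beta> A B n t + real n * (real n + \<alpha>))
                          / (2 * real n + \<alpha> + \<beta>)"
proof -
  note hyps = assms(1-5) and t = assms(6,7) and n = assms(8)
  have pos: "2 * real n + \<alpha> + \<beta> > 0" using assms(1,2) by simp
  have dlnD: "(\<lambda>s. ln (hankelD \<alpha> \<beta> A B s n)) differentiable (at t)"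
    using ln_hankel_deriv[OF hyps t] real_differentiable_def by blast
  have dH: "(Hn \<alpha> \<beta> A B n has_real_derivative - (2 * real n + \<alpha> + \<beta>) * rn \<alpha> \<beta> A B n t) (at t)"
    by (rule Hn_has_deriv[OF hyps t n])
  then have H': "deriv (Hn \<alpha> \<beta> A B n) t = - (2 * real n + \<alpha> + \<beta>) * rn \<alpha> \<beta> A B n t"
    by (rule DERIV_imp_deriv)
  have H: "Hn \<alpha> \<beta> A B n t = - (2 * real n + \<alpha> + \<beta>) * p1 \<alpha> \<beta> A B n t - real n * (real n + \<alpha>)"
    by (rule Hn_eq_p1[OF hyps t n])
  have Y: "yn \<alpha> \<beta> A B n t = - p1 \<alpha> \<beta> A B n t + t * rn \<alpha> \<beta> A B n t"
    by (rule yn_eq_p1[OF hyps t n])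
  show ?thesis
    using dlnD dH H pos unfolding H' Y
    by (auto simp: real_differentiable_def field_simps)
qed

end
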